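(* Let $(w_t)_{t\in\mathbb{N}_0}$ be mutually independent $\mathbb{R}^d$-valued random vectors with $\mathsf{E}[w_t]=0$, $\mathsf{E}[w_tw_t^{\mathrm T}]=Q_t$, and $\mathsf{E}[\|w_t\|^4]\le C_4$ for all $t$, for some $C_4>0$. Let $C_1:=\sup_t\mathsf{E}[\|w_t\|]$. Fix $r>C_1$ and $x\in\mathbb{R}^d$, and consider the closed-loop random walk $$x_{t+1}=x_t-\operatorname{sat}_r(x_t)+w_t,\qquad x_0=x,$$ with natural filtration $(\mathfrak{F}_t)_{t\in\mathbb{N}_0}$, and set $\xi_t:=\|x_t\|$. Then there exist constants $b>0$ and $J<\infty$ such that for all $t$, $$\mathsf{E}[\xi_{t+1}-\xi_t\mid\mathfrak{F}_t]\le -b\quad\text{on the event }\{\xi_t>J\}.$$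
   Context: For $r>0$, $\operatorname{sat}_r:\mathbb{R}^d\to\{y:\|y\|\le r\}$ is defined by $\operatorname{sat}_r(y)=y$ if $\|y\|\le r$ and $\operatorname{sat}_r(y)=ry/\|y\|$ otherwise (radial, not componentwise, saturation). $\|\cdot\|$ is the Euclidean norm. *)

theory Defs
  imports "HOL-Probability.Probability"
begin

definition sat :: "real \<Rightarrow> 'v::real_normed_vector \<Rightarrow> 'v" where
  "sat r y = (if norm y \<le> r then y else (r / norm y) *\<^sub>R y)"

fun cl_walk :: "real \<Rightarrow> 'v::real_normed_vector \<Rightarrow> (nat \<Rightarrow> 'v) \<Rightarrow> nat \<Rightarrow> 'v" where
  "cl_walk r x ws 0 = x"
| "cl_walk r x ws (Suc t) = cl_walk r x ws t - sat r (cl_walk r x ws t) + ws t"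

definition nat_filtration ::
  "'a measure \<Rightarrow> (nat \<Rightarrow> 'a \<Rightarrow> 'b::topological_space) \<Rightarrow> nat \<Rightarrow> 'a measure" where
  "nat_filtration M X t =
     sigma (space M) {X s -` A \<inter> space M | s A. s \<le> t \<and> A \<in> sets borel}"

end

theory Submission
  imports Defs
begin

text \<open>Outside the ball of radius r the saturation pulls x_t radially back by exactly r, so by the
  triangle inequality \<xi>_(t+1) - \<xi>_t \<le> \<parallel>w_t\<parallel> - r there. The natural filtration of the walk up to
  time t is generated by w_0, ..., w_(t-1), which are independent of w_t; conditioning the bound
  therefore gives drift at most E\<parallel>w_t\<parallel> - r \<le> C_1 - r on {\<xi>_t > r}, i.e. b = r - C_1 and J = r.\<close>

lemma norm_sat_le: "norm (sat r y) \<le> \<bar>r\<bar>"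
  unfolding sat_def by (auto simp: abs_mult)

lemma norm_diff_sat:
  assumes "0 \<le> r" "r < norm y"
  shows "norm (y - sat r y) = norm y - r"
proof -
  have "y - sat r y = (1 - r / norm y) *\<^sub>R y"
    using assms by (simp add: sat_def algebra_simps)
  moreover have "0 \<le> 1 - r / norm y"
    using assms by (simp add: divide_le_eq_1)
  ultimately have "norm (y - sat r y) = (1 - r / norm y) * norm y"
    by simp
  also have "\<dots> = norm y - r"
    using assms by (auto simp: field_simps)
  finally show ?thesis .
qed

lemma borel_measurable_sat [measurable]:
  fixes f :: "'a \<Rightarrow> 'v::euclidean_space"
  assumes [measurable]: "f \<in> borel_measurable M"
  shows "(\<lambda>\<omega>. sat r (f \<omega>)) \<in> borel_measurable M"
  unfolding sat_def by measurable

lemma cl_walk_cong: "(\<And>i. i < t \<Longrightarrow> ws i = ws' i) \<Longrightarrow> cl_walk r x ws t = cl_walk r x ws' t"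
  by (induction t) auto

lemma norm_cl_walk_Suc_le:
  assumes "0 \<le> r" "r < norm (cl_walk r x ws t)"
  shows "norm (cl_walk r x ws (Suc t)) \<le> norm (cl_walk r x ws t) - r + norm (ws t)"
  using norm_triangle_ineq[of "cl_walk r x ws t - sat r (cl_walk r x ws t)" "ws t"]
    norm_diff_sat[OF assms] by simp

lemma borel_measurable_cl_walk [measurable]:
  fixes w :: "nat \<Rightarrow> 'a \<Rightarrow> 'v::euclidean_space"
  assumes [measurable]: "\<And>s. w s \<in> borel_measurable M"
  shows "(\<lambda>\<omega>. cl_walk r x (\<lambda>s. w s \<omega>) t) \<in> borel_measurable M"
  by (induction t) simp_all

lemma measurable_cl_walk_PiM:
  fixes x :: "'v::euclidean_space"
  assumes "s \<le> t"
  shows "(\<lambda>f. cl_walk r x f s) \<in> borel_measurable (PiM {..<t} (\<lambda>_. borel))"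
  using assms
proof (induction s)
  case (Suc s)
  then have [measurable]: "(\<lambda>f. cl_walk r x f s) \<in> borel_measurable (PiM {..<t} (\<lambda>_. borel))"
    and [measurable]: "(\<lambda>f. f s) \<in> measurable (PiM {..<t} (\<lambda>_. borel)) (borel :: 'v measure)"
    by (auto intro!: measurable_component_singleton)
  show ?case by simp
qed simp

lemma (in prob_space) integrable_cl_walk:
  fixes w :: "nat \<Rightarrow> 'a \<Rightarrow> 'v::euclidean_space"
  assumes "\<And>s. integrable M (w s)"
  shows "integrable M (\<lambda>\<omega>. cl_walk r x (\<lambda>s. w s \<omega>) t)"
proof (induction t)
  case (Suc t)
  have [measurable]: "\<And>s. w s \<in> borel_measurable M"
    using assms by auto
  have "integrable M (\<lambda>\<omega>. sat r (cl_walk r x (\<lambda>s. w s \<omega>) t))"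
    by (rule integrable_const_bound[where B="\<bar>r\<bar>"]) (auto simp: norm_sat_le)
  then show ?case
    using Suc assms[of t] by simp
qed simp

lemma (in prob_space) real_cond_exp_indep:
  assumes F: "subalgebra M F"
    and FY: "sets F \<subseteq> sets (vimage_algebra (space M) Y N)"
    and indep: "indep_var N Y N' Z"
    and h: "h \<in> borel_measurable N'"
    and hZ: "integrable M (\<lambda>\<omega>. h (Z \<omega>))"
  shows "AE \<omega> in M. real_cond_exp M F (\<lambda>\<omega>. h (Z \<omega>)) \<omega> = expectation (\<lambda>\<omega>. h (Z \<omega>))"
proof -
  interpret finite_measure_subalgebra M F
    by unfold_locales (rule F)
  have Ym[measurable]: "Y \<in> measurable M N"
    using indep unfolding indep_var_eq by blast
  show ?thesis
  proof (rule real_cond_exp_charact)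
    fix A assume "A \<in> sets F"
    then obtain B where B[measurable]: "B \<in> sets N" and A: "A = Y -` B \<inter> space M"
      using FY sets_vimage_algebra2[of Y "space M" N] measurable_space[OF Ym] by blast
    have "indep_var borel (indicator B \<circ> Y) borel (h \<circ> Z)"
      by (rule indep_var_compose[OF indep _ h]) simp
    then have "(\<integral>\<omega>. indicator B (Y \<omega>) * h (Z \<omega>) \<partial>M) =
        (\<integral>\<omega>. indicator B (Y \<omega>) \<partial>M) * expectation (\<lambda>\<omega>. h (Z \<omega>))"
      by (intro indep_var_lebesgue_integral)
        (auto simp: hZ comp_def intro!: integrable_const_bound[where B=1])
    then show "(\<integral>\<omega>\<in>A. h (Z \<omega>) \<partial>M) = (\<integral>\<omega>\<in>A. expectation (\<lambda>\<omega>. h (Z \<omega>)) \<partial>M)"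
      unfolding A set_lebesgue_integral_def
      by (simp add: indicator_def mult.commute cong: Bochner_Integration.integral_cong)
  qed (auto simp: hZ)
qed

context sigma_finite_subalgebra
begin

lemma real_cond_exp_mono_on_event:
  assumes E: "E \<in> sets F" and le: "\<And>\<omega>. \<omega> \<in> E \<Longrightarrow> f \<omega> \<le> g \<omega>"
    and f: "integrable M f" and g: "integrable M g"
  shows "AE \<omega> in M. \<omega> \<in> E \<longrightarrow> real_cond_exp M F f \<omega> \<le> real_cond_exp M F g \<omega>"
proof -
  have EM[measurable]: "E \<in> sets M"
    using E subalg by (meson subalgebra_def subsetD)
  have [measurable]: "indicator E \<in> borel_measurable F" "f \<in> borel_measurable M" "g \<in> borel_measurable M"
    using E f g by auto
  have fE: "integrable M (\<lambda>\<omega>. indicator E \<omega> * f \<omega>)" and gE: "integrable M (\<lambda>\<omega>. indicator E \<omega> * g \<omega>)"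
    using integrable_mult_indicator[OF EM f] integrable_mult_indicator[OF EM g] by simp_all
  have "AE \<omega> in M. real_cond_exp M F (\<lambda>\<omega>. indicator E \<omega> * f \<omega>) \<omega> = indicator E \<omega> * real_cond_exp M F f \<omega>"
    by (rule real_cond_exp_mult) (auto simp: fE)
  moreover have "AE \<omega> in M. real_cond_exp M F (\<lambda>\<omega>. indicator E \<omega> * g \<omega>) \<omega> = indicator E \<omega> * real_cond_exp M F g \<omega>"
    by (rule real_cond_exp_mult) (auto simp: gE)
  moreover have "AE \<omega> in M. real_cond_exp M F (\<lambda>\<omega>. indicator E \<omega> * f \<omega>) \<omega>
      \<le> real_cond_exp M F (\<lambda>\<omega>. indicator E \<omega> * g \<omega>) \<omega>"
    by (rule real_cond_exp_mono[OF _ fE gE]) (auto simp: indicator_def le)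
  ultimately show ?thesis
    by eventually_elim (auto split: split_indicator)
qed

end

lemma space_nat_filtration [simp]: "space (nat_filtration M X t) = space M"
  unfolding nat_filtration_def by (rule space_measure_of) auto

lemma sets_nat_filtration:
  "sets (nat_filtration M X t) =
     sigma_sets (space M) {X s -` A \<inter> space M | s A. s \<le> t \<and> A \<in> sets borel}"
  unfolding nat_filtration_def by (rule sets_measure_of) auto

lemma measurable_nat_filtration:
  assumes "s \<le> t"
  shows "X s \<in> borel_measurable (nat_filtration M X t)"
  using assms by (intro measurableI) (auto simp: sets_nat_filtration intro: sigma_sets.Basic)

lemma subalgebra_nat_filtration:
  assumes "\<And>s. X s \<in> borel_measurable M"
  shows "subalgebra M (nat_filtration M X t)"
  unfolding subalgebra_def sets_nat_filtration using assms
  by (auto intro!: sets.sigma_sets_subset)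

lemma sets_nat_filtration_subset_vimage_algebra:
  fixes X :: "nat \<Rightarrow> 'a \<Rightarrow> 'b::topological_space"
  assumes Y: "Y \<in> space M \<rightarrow> space N"
    and g: "\<And>s. s \<le> t \<Longrightarrow> g s \<in> borel_measurable N"
    and X: "\<And>s \<omega>. s \<le> t \<Longrightarrow> \<omega> \<in> space M \<Longrightarrow> X s \<omega> = g s (Y \<omega>)"
  shows "sets (nat_filtration M X t) \<subseteq> sets (vimage_algebra (space M) Y N)"
  unfolding sets_nat_filtration
proof (rule sets.sigma_sets_subset', safe)
  fix s and A :: "'b set" assume "s \<le> t" "A \<in> sets borel"
  then have "X s -` A \<inter> space M = Y -` (g s -` A \<inter> space N) \<inter> space M"
    and "g s -` A \<inter> space N \<in> sets N"
    using X g Y by (auto simp: measurable_sets)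
  then show "X s -` A \<inter> space M \<in> sets (vimage_algebra (space M) Y N)"
    unfolding sets_vimage_algebra2[OF Y] by blast
qed (metis sets.top space_vimage_algebra)

lemma (in prob_space) expectation_norm_le_moment:
  assumes "n \<ge> 1" and "integrable M (\<lambda>\<omega>. norm (f \<omega>))" "integrable M (\<lambda>\<omega>. norm (f \<omega>) ^ n)"
  shows "expectation (\<lambda>\<omega>. norm (f \<omega>)) \<le> 1 + expectation (\<lambda>\<omega>. norm (f \<omega>) ^ n)"
proof -
  have "norm v \<le> 1 + norm v ^ n" for v :: 'b
  proof (cases "norm v \<le> 1")
    case False
    then have "norm v ^ 1 \<le> norm v ^ n"
      using \<open>n \<ge> 1\<close> by (intro power_increasing) auto
    then show ?thesis by simp
  qed (simp add: add_increasing2)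
  then have "expectation (\<lambda>\<omega>. norm (f \<omega>)) \<le> expectation (\<lambda>\<omega>. 1 + norm (f \<omega>) ^ n)"
    using assms by (intro integral_mono) auto
  then show ?thesis
    using assms by (simp add: prob_space)
qed

lemma (in prob_space) cl_walk_drift_le:
  fixes w :: "nat \<Rightarrow> 'a \<Rightarrow> 'v::euclidean_space" and x :: 'v
  assumes indep: "indep_vars (\<lambda>_. borel) w UNIV"
    and w: "\<And>s. integrable M (w s)" and "0 \<le> r"
  defines "X \<equiv> \<lambda>s \<omega>. cl_walk r x (\<lambda>s. w s \<omega>) s"
  shows "AE \<omega> in M. r < norm (X t \<omega>) \<longrightarrow>
    real_cond_exp M (nat_filtration M X t) (\<lambda>\<omega>. norm (X (Suc t) \<omega>) - norm (X t \<omega>)) \<omega>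
      \<le> expectation (\<lambda>\<omega>. norm (w t \<omega>)) - r"
proof -
  define F where "F = nat_filtration M X t"
  define E where "E = X t -` {v. r < norm v} \<inter> space M"
  define Y where "Y = (\<lambda>\<omega>. restrict (\<lambda>i. w i \<omega>) {..<t})"
  have [measurable]: "\<And>s. w s \<in> borel_measurable M"
    using w by auto
  have [measurable]: "\<And>s. X s \<in> borel_measurable M"
    unfolding X_def by measurable
  interpret finite_measure_subalgebra M F
    by unfold_locales (simp add: F_def subalgebra_nat_filtration)
  have "{v. r < norm v} \<in> sets (borel :: 'v measure)"
    by (intro borel_open open_Collect_less continuous_intros)
  from measurable_sets[OF measurable_nat_filtration[OF order_refl] this]
  have "E \<in> sets F"
    unfolding E_def F_def space_nat_filtration .
  moreover have "norm (X (Suc t) \<omega>) - norm (X t \<omega>) \<le> norm (w t \<omega>) - r" if "\<omega> \<in> E" for \<omega>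
    using norm_cl_walk_Suc_le[OF \<open>0 \<le> r\<close>, of x "\<lambda>s. w s \<omega>" t] that
    unfolding E_def X_def by simp
  ultimately have "AE \<omega> in M. \<omega> \<in> E \<longrightarrow>
      real_cond_exp M F (\<lambda>\<omega>. norm (X (Suc t) \<omega>) - norm (X t \<omega>)) \<omega>
        \<le> real_cond_exp M F (\<lambda>\<omega>. norm (w t \<omega>) - r) \<omega>"
    using integrable_cl_walk[OF w] w
    by (intro real_cond_exp_mono_on_event) (auto simp: X_def simp del: cl_walk.simps)
  moreover have "sets F \<subseteq> sets (vimage_algebra (space M) Y (PiM {..<t} (\<lambda>_. borel)))"
    unfolding F_def
    by (rule sets_nat_filtration_subset_vimage_algebra[where g="\<lambda>s f. cl_walk r x f s"])
      (auto simp: X_def Y_def space_PiM measurable_cl_walk_PiM intro!: cl_walk_cong)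
  then have "AE \<omega> in M. real_cond_exp M F (\<lambda>\<omega>. norm (w t \<omega>) - r) \<omega>
      = expectation (\<lambda>\<omega>. norm (w t \<omega>)) - r"
    using real_cond_exp_indep[OF subalg _ indep_var_restrict[OF indep, of "{..<t}" "{t}"],
        of "\<lambda>f. norm (f t) - r"] w[of t]
    by (auto simp: Y_def prob_space measurable_component_singleton)
  ultimately show ?thesis
    unfolding F_def[symmetric] using AE_space by eventually_elim (auto simp: E_def)
qed

theorem lemma2:
  fixes M :: "'a measure"
    and w :: "nat \<Rightarrow> 'a \<Rightarrow> 'v::euclidean_space"
    and Q :: "nat \<Rightarrow> 'v \<Rightarrow> 'v \<Rightarrow> real"
    and C4 r :: real
    and x :: 'v
  assumes "prob_space M"
    and "prob_space.indep_vars M (\<lambda>_. borel) w UNIV"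
    and "\<And>t. integrable M (w t)"
    and "\<And>t. (\<integral>\<omega>. w t \<omega> \<partial>M) = 0"
    and "\<And>t i j. i \<in> Basis \<Longrightarrow> j \<in> Basis \<Longrightarrow>
           integrable M (\<lambda>\<omega>. (w t \<omega> \<bullet> i) * (w t \<omega> \<bullet> j)) \<and>
           (\<integral>\<omega>. (w t \<omega> \<bullet> i) * (w t \<omega> \<bullet> j) \<partial>M) = Q t i j"
    and "C4 > 0"
    and "\<And>t. integrable M (\<lambda>\<omega>. norm (w t \<omega>) ^ 4)"
    and "\<And>t. (\<integral>\<omega>. norm (w t \<omega>) ^ 4 \<partial>M) \<le> C4"
    and "r > (SUP t. \<integral>\<omega>. norm (w t \<omega>) \<partial>M)"
  shows "\<exists>b>0. \<exists>J::real. \<forall>t.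
           AE \<omega> in M. norm (cl_walk r x (\<lambda>s. w s \<omega>) t) > J \<longrightarrow>
             real_cond_exp M (nat_filtration M (\<lambda>s \<omega>. cl_walk r x (\<lambda>s. w s \<omega>) s) t)
               (\<lambda>\<omega>. norm (cl_walk r x (\<lambda>s. w s \<omega>) (Suc t)) - norm (cl_walk r x (\<lambda>s. w s \<omega>) t)) \<omega>
             \<le> - b"
proof -
  interpret prob_space M by fact
  define C1 where "C1 = (SUP t. \<integral>\<omega>. norm (w t \<omega>) \<partial>M)"
  \<comment> \<open>The fourth-moment bound only makes the supremum finite, so that C1 is not a junk value.\<close>
  have "expectation (\<lambda>\<omega>. norm (w t \<omega>)) \<le> 1 + C4" for t
    using expectation_norm_le_moment[of 4 "w t"] assms(3,7,8)[of t] by simp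
  then have C1_upper: "expectation (\<lambda>\<omega>. norm (w t \<omega>)) \<le> C1" for t
    unfolding C1_def by (intro cSUP_upper bdd_aboveI2) auto
  moreover have "0 \<le> expectation (\<lambda>\<omega>. norm (w 0 \<omega>))"
    by (rule integral_nonneg_AE) simp
  moreover have "C1 < r"
    using assms(9) unfolding C1_def .
  ultimately have "0 \<le> r"
    by (meson order.trans less_imp_le)
  show ?thesis
  proof (intro exI conjI allI)
    show "0 < r - C1"
      using \<open>C1 < r\<close> by simp
    fix t
    show "AE \<omega> in M. norm (cl_walk r x (\<lambda>s. w s \<omega>) t) > r \<longrightarrow>
        real_cond_exp M (nat_filtration M (\<lambda>s \<omega>. cl_walk r x (\<lambda>s. w s \<omega>) s) t)
          (\<lambda>\<omega>. norm (cl_walk r x (\<lambda>s. w s \<omega>) (Suc t)) - norm (cl_walk r x (\<lambda>s. w s \<omega>) t)) \<omega>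
        \<le> - (r - C1)"
      using cl_walk_drift_le[OF assms(2,3) \<open>0 \<le> r\<close>, of x t]
      by eventually_elim (use C1_upper[of t] in auto)
  qed
qed

end
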